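(* The generating function $$G_{(123,132)}(x,p,q,y,z)=\sum_{n\ge 0}\ \sum_{\pi\in S_n(123,132)} x^n p^{\operatorname{asc}(\pi)} q^{\operatorname{des}(\pi)} y^{\operatorname{MNA}(\pi)} z^{\operatorname{MND}(\pi)}$$ is equal to $$\frac{A}{1 - 2 q^2 x^2 z - p q x^2 y z - 2 p q^2 x^3 y z + q^4 x^4 z^2 - p q^3 x^4 y z^2},$$ where $$A=1 + x + p x^2 y + q x^2 z - 2 q^2 x^2 z - q^2 x^3 z - p q x^2 y z + 2 p q x^3 y z - 2 p q^2 x^3 y z - q^3 x^4 z^2 + q^4 x^4 z^2 + p q^2 x^4 y z^2 - p q^3 x^4 y z^2.$$
   Context: For $n\ge 0$, $S_n$ denotes the set of permutations $\pi=\pi_1\pi_2\cdots\pi_n$ of $[n]=\{1,\dots,n\}$ in one-line notation ($S_0$ consists of the empty permutation, for which all statistics below are $0$). A permutation $\pi\in S_n$ avoids a pattern $\tau\in S_k$ if there are no indices $i_1<\dots<i_k$ such that $\pi_{i_a}<\pi_{i_b}$ if and only if $\tau_a<\tau_b$; $S_n(\tau,\rho)$ is the set of permutations in $S_n$ avoiding both $\tau$ and $\rho$. $\operatorname{asc}(\pi)$ (resp. $\operatorname{des}(\pi)$) is the number of $i\in[n-1]$ with $\pi_i<\pi_{i+1}$ (resp. $\pi_i>\pi_{i+1}$). $\operatorname{MNA}(\pi)$ is the maximum size of a set $I\subseteq[n-1]$ such that $\pi_i<\pi_{i+1}$ for all $i\in I$ and $|i-j|\ge 2$ for distinct $i,j\in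 I$ (maximum number of non-overlapping ascents); $\operatorname{MND}(\pi)$ is defined analogously with $\pi_i>\pi_{i+1}$ (maximum number of non-overlapping descents). *)

theory Defs
  imports "HOL-Combinatorics.Multiset_Permutations" "HOL-Computational_Algebra.Formal_Power_Series"
begin

(* Permutations of [n] in one-line notation are lists; positions are 0-indexed. *)

definition contains_pattern :: "nat list \<Rightarrow> nat list \<Rightarrow> bool" where
  "contains_pattern \<pi> \<tau> \<longleftrightarrow>
     (\<exists>is. length is = length \<tau> \<and> sorted_wrt (<) is \<and> (\<forall>i\<in>set is. i < length \<pi>) \<and>
        (\<forall>a<length \<tau>. \<forall>b<length \<tau>. (\<pi> ! (is ! a) < \<pi> ! (is ! b)) \<longleftrightarrow> (\<tau> ! a < \<tau> ! b)))"

definition avoids :: "nat list \<Rightarrow> nat list \<Rightarrow> bool" where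
  "avoids \<pi> \<tau> \<longleftrightarrow> \<not> contains_pattern \<pi> \<tau>"

definition Av2 :: "nat \<Rightarrow> nat list \<Rightarrow> nat list \<Rightarrow> nat list set" where
  "Av2 n \<tau> \<rho> = {\<pi> \<in> permutations_of_set {1..n}. avoids \<pi> \<tau> \<and> avoids \<pi> \<rho>}"

definition asc_set :: "nat list \<Rightarrow> nat set" where
  "asc_set \<pi> = {i. Suc i < length \<pi> \<and> \<pi> ! i < \<pi> ! Suc i}"

definition des_set :: "nat list \<Rightarrow> nat set" where
  "des_set \<pi> = {i. Suc i < length \<pi> \<and> \<pi> ! i > \<pi> ! Suc i}"

definition asc :: "nat list \<Rightarrow> nat" where "asc \<pi> = card (asc_set \<pi>)"
definition des :: "nat list \<Rightarrow> nat" where "des \<pi> = card (des_set \<pi>)"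

definition non_overlapping :: "nat set \<Rightarrow> bool" where
  "non_overlapping I \<longleftrightarrow> (\<forall>i\<in>I. \<forall>j\<in>I. i \<noteq> j \<longrightarrow> i + 2 \<le> j \<or> j + 2 \<le> i)"

definition MNA :: "nat list \<Rightarrow> nat" where
  "MNA \<pi> = Max {card I | I. I \<subseteq> asc_set \<pi> \<and> non_overlapping I}"

definition MND :: "nat list \<Rightarrow> nat" where
  "MND \<pi> = Max {card I | I. I \<subseteq> des_set \<pi> \<and> non_overlapping I}"

definition G_123_132 :: "'a::comm_ring_1 \<Rightarrow> 'a \<Rightarrow> 'a \<Rightarrow> 'a \<Rightarrow> 'a fps" where
  "G_123_132 p q y z = Abs_fps (\<lambda>n. \<Sum>\<pi>\<in>Av2 n [1,2,3] [1,3,2].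
      p ^ asc \<pi> * q ^ des \<pi> * y ^ MNA \<pi> * z ^ MND \<pi>)"

end

theory Submission
  imports Defs
begin

(*
  A permutation avoids both 123 and 132 iff no entry has two larger entries to its right.
  Hence an element of S_{n+1}(123,132) starts with n+1 or with n, and deleting the first
  entry (relabelling n+1 as n in the second case) maps each of the two classes bijectively
  onto S_n(123,132). These permutations have no two adjacent ascents, so MNA = asc, while
  MND is attained by choosing descents greedily from the left. Recording whether the first
  entry is the maximum, and whether the first adjacent pair is still available to the greedy
  choice, gives four series satisfying a linear system over x; solving it yields the rational
  function.
*)

section \<open>Avoiding 123 and 132\<close>

lemma contains_pattern_3:
  "contains_pattern l [a, b, c] \<longleftrightarrow>
     (\<exists>i j k. i < j \<and> j < k \<and> k < length l \<and>
        (l!i < l!j \<longleftrightarrow> a < b) \<and> (l!i < l!k \<longleftrightarrow> a < c) \<and>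
        (l!j < l!i \<longleftrightarrow> b < a) \<and> (l!j < l!k \<longleftrightarrow> b < c) \<and>
        (l!k < l!i \<longleftrightarrow> c < a) \<and> (l!k < l!j \<longleftrightarrow> c < b))"
  (is "_ \<longleftrightarrow> (\<exists>i j k. ?occ i j k)")
proof
  assume "contains_pattern l [a, b, c]"
  then obtain ix where "length ix = length [a, b, c]" "sorted_wrt (<) ix" "\<forall>i\<in>set ix. i < length l"
    "\<forall>u<length [a, b, c]. \<forall>v<length [a, b, c]. l!(ix!u) < l!(ix!v) \<longleftrightarrow> [a, b, c]!u < [a, b, c]!v"
    unfolding contains_pattern_def by blast
  moreover from this(1) obtain i j k where "ix = [i, j, k]"
    by (auto simp: length_Suc_conv)
  ultimately have "?occ i j k"
    by (simp add: less_Suc_eq all_conj_distrib)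
  then show "\<exists>i j k. ?occ i j k" by blast
next
  assume "\<exists>i j k. ?occ i j k"
  then obtain i j k where "?occ i j k" by blast
  then show "contains_pattern l [a, b, c]"
    unfolding contains_pattern_def
    by (intro exI[of _ "[i, j, k]"]) (auto simp: less_Suc_eq all_conj_distrib)
qed

definition avoids_123_132 :: "nat list \<Rightarrow> bool" where
  "avoids_123_132 l \<longleftrightarrow> \<not> (\<exists>i j k. i < j \<and> j < k \<and> k < length l \<and> l!i < l!j \<and> l!i < l!k)"

lemma avoids_123_and_132_iff:
  assumes "distinct l"
  shows "avoids l [1, 2, 3] \<and> avoids l [1, 3, 2] \<longleftrightarrow> avoids_123_132 l"
proof -
  have "contains_pattern l [1, 2, 3] \<or> contains_pattern l [1, 3, 2] \<longleftrightarrow>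
        (\<exists>i j k. i < j \<and> j < k \<and> k < length l \<and> l!i < l!j \<and> l!i < l!k)"
  proof
    assume "contains_pattern l [1, 2, 3] \<or> contains_pattern l [1, 3, 2]"
    then show "\<exists>i j k. i < j \<and> j < k \<and> k < length l \<and> l!i < l!j \<and> l!i < l!k"
      unfolding contains_pattern_3 by auto
  next
    assume "\<exists>i j k. i < j \<and> j < k \<and> k < length l \<and> l!i < l!j \<and> l!i < l!k"
    then obtain i j k where ijk: "i < j" "j < k" "k < length l" "l!i < l!j" "l!i < l!k"
      by blast
    have "l!j \<noteq> l!k"
      using assms ijk by (simp add: nth_eq_iff_index_eq)
    then consider "l!j < l!k" | "l!k < l!j" by linarith
    then show "contains_pattern l [1, 2, 3] \<or> contains_pattern l [1, 3, 2]"
    proof cases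
      case 1
      then have "contains_pattern l [1, 2, 3]"
        unfolding contains_pattern_3 using ijk by (intro exI[of _ i] exI[of _ j] exI[of _ k]) auto
      then show ?thesis ..
    next
      case 2
      then have "contains_pattern l [1, 3, 2]"
        unfolding contains_pattern_3 using ijk by (intro exI[of _ i] exI[of _ j] exI[of _ k]) auto
      then show ?thesis ..
    qed
  qed
  then show ?thesis
    unfolding avoids_def avoids_123_132_def by blast
qed

lemma avoids_123_132_Cons_nth:
  "avoids_123_132 (a # l) \<longleftrightarrow>
     avoids_123_132 l \<and> \<not> (\<exists>j k. j < k \<and> k < length l \<and> a < l!j \<and> a < l!k)"
proof -
  have "(\<exists>i j k. i < j \<and> j < k \<and> k < length (a # l) \<and>
                   (a # l)!i < (a # l)!j \<and> (a # l)!i < (a # l)!k) \<longleftrightarrow>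
      (\<exists>i j k. i < j \<and> j < k \<and> k < length l \<and> l!i < l!j \<and> l!i < l!k) \<or>
      (\<exists>j k. j < k \<and> k < length l \<and> a < l!j \<and> a < l!k)"
  proof (intro iffI; elim disjE exE conjE)
    fix i j k
    assume "i < j" "j < k" "k < length (a # l)" "(a # l)!i < (a # l)!j" "(a # l)!i < (a # l)!k"
    then show "(\<exists>i j k. i < j \<and> j < k \<and> k < length l \<and> l!i < l!j \<and> l!i < l!k) \<or>
      (\<exists>j k. j < k \<and> k < length l \<and> a < l!j \<and> a < l!k)"
      by (cases i; cases j; cases k) auto
  next
    fix i j k assume "i < j" "j < k" "k < length l" "l!i < l!j" "l!i < l!k"
    then show "\<exists>i j k. i < j \<and> j < k \<and> k < length (a # l) \<and>
                   (a # l)!i < (a # l)!j \<and> (a # l)!i < (a # l)!k"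
      by (intro exI[of _ "Suc i"] exI[of _ "Suc j"] exI[of _ "Suc k"]) simp
  next
    fix j k assume "j < k" "k < length l" "a < l!j" "a < l!k"
    then show "\<exists>i j k. i < j \<and> j < k \<and> k < length (a # l) \<and>
                   (a # l)!i < (a # l)!j \<and> (a # l)!i < (a # l)!k"
      by (intro exI[of _ 0] exI[of _ "Suc j"] exI[of _ "Suc k"]) simp
  qed
  then show ?thesis
    unfolding avoids_123_132_def by simp
qed

lemma avoids_123_132_Cons:
  assumes "distinct l"
  shows "avoids_123_132 (a # l) \<longleftrightarrow>
           avoids_123_132 l \<and> (\<forall>x\<in>set l. \<forall>x'\<in>set l. a < x \<longrightarrow> a < x' \<longrightarrow> x = x')"
  unfolding avoids_123_132_Cons_nth
proof (intro conj_cong refl iffI ballI impI)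
  fix x x' assume no: "\<not> (\<exists>j k. j < k \<and> k < length l \<and> a < l!j \<and> a < l!k)"
    and "x \<in> set l" "x' \<in> set l" "a < x" "a < x'"
  then obtain i i' where "i < length l" "x = l!i" "i' < length l" "x' = l!i'"
    by (auto simp: in_set_conv_nth)
  with no \<open>a < x\<close> \<open>a < x'\<close> show "x = x'"
    by (cases i i' rule: linorder_cases) auto
next
  assume "\<forall>x\<in>set l. \<forall>x'\<in>set l. a < x \<longrightarrow> a < x' \<longrightarrow> x = x'"
  then show "\<not> (\<exists>j k. j < k \<and> k < length l \<and> a < l!j \<and> a < l!k)"
    using assms by (metis nth_mem nth_eq_iff_index_eq less_trans less_irrefl)
qed

lemma avoids_123_132_map:
  assumes "\<forall>x\<in>set l. \<forall>x'\<in>set l. f x < f x' \<longleftrightarrow> x < x'"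
  shows "avoids_123_132 (map f l) \<longleftrightarrow> avoids_123_132 l"
proof -
  have "f (l!i) < f (l!j) \<longleftrightarrow> l!i < l!j" if "i < length l" "j < length l" for i j
    using assms that by simp
  then show ?thesis
    unfolding avoids_123_132_def by (intro arg_cong[of _ _ Not] ex_cong1 conj_cong refl) auto
qed

section \<open>Non-overlapping adjacent pairs\<close>

definition adj_set :: "('b \<Rightarrow> 'b \<Rightarrow> bool) \<Rightarrow> 'b list \<Rightarrow> nat set" where
  "adj_set R l = {i. Suc i < length l \<and> R (l!i) (l!Suc i)}"

lemma finite_adj_set [simp]: "finite (adj_set R l)"
  by (rule finite_subset[of _ "{..<length l}"]) (auto simp: adj_set_def)

lemma adj_set_Nil [simp]: "adj_set R [] = {}"
  and adj_set_singleton [simp]: "adj_set R [a] = {}"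
  by (auto simp: adj_set_def)

lemma Suc_in_adj_set_Cons [simp]: "Suc i \<in> adj_set R (a # l) \<longleftrightarrow> i \<in> adj_set R l"
  by (simp add: adj_set_def)

lemma zero_in_adj_set_Cons_Cons [simp]: "0 \<in> adj_set R (a # b # l) \<longleftrightarrow> R a b"
  by (simp add: adj_set_def)

lemma adj_set_Cons_Cons: "adj_set R (a # b # l) = {i. i = 0 \<and> R a b} \<union> Suc ` adj_set R (b # l)"
proof (rule set_eqI)
  fix i show "i \<in> adj_set R (a # b # l) \<longleftrightarrow> i \<in> {i. i = 0 \<and> R a b} \<union> Suc ` adj_set R (b # l)"
    by (cases i) auto
qed

lemma card_adj_set_Cons_Cons:
  "card (adj_set R (a # b # l)) = of_bool (R a b) + card (adj_set R (b # l))"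
  by (simp add: adj_set_Cons_Cons card_image)

lemma asc_set_eq_adj_set: "asc_set l = adj_set (<) l"
  by (simp add: asc_set_def adj_set_def)

lemma des_set_eq_adj_set: "des_set l = adj_set (>) l"
  by (simp add: des_set_def adj_set_def)

lemma asc_Nil [simp]: "asc [] = 0" and asc_singleton [simp]: "asc [a] = 0"
  by (simp_all add: asc_def asc_set_eq_adj_set)

lemma des_Nil [simp]: "des [] = 0" and des_singleton [simp]: "des [a] = 0"
  by (simp_all add: des_def des_set_eq_adj_set)

lemma asc_Cons_Cons: "asc (a # b # l) = of_bool (a < b) + asc (b # l)"
  by (simp add: asc_def asc_set_eq_adj_set card_adj_set_Cons_Cons)

lemma des_Cons_Cons: "des (a # b # l) = of_bool (b < a) + des (b # l)"
  by (simp add: des_def des_set_eq_adj_set card_adj_set_Cons_Cons)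

lemma non_overlapping_shift: "non_overlapping I \<Longrightarrow> non_overlapping {i. i + k \<in> I}"
  unfolding non_overlapping_def by fastforce

lemma non_overlapping_Suc_image: "non_overlapping (Suc ` I) \<longleftrightarrow> non_overlapping I"
  unfolding non_overlapping_def by auto

lemma non_overlapping_insert_0_shift_2:
  "non_overlapping I \<Longrightarrow> non_overlapping (insert 0 ((+) 2 ` I))"
  unfolding non_overlapping_def by auto

lemma card_non_overlapping_le:
  assumes "non_overlapping I" "finite I"
  shows "card I \<le> Suc (card {i. i + 2 \<in> I})"
proof -
  have fin: "finite {i. i + 2 \<in> I}"
    using finite_vimageI[OF assms(2), of "\<lambda>i. i + 2"] by (simp add: vimage_def inj_on_def)
  have "I \<subseteq> (I \<inter> {0, 1}) \<union> (\<lambda>i. i + 2) ` {i. i + 2 \<in> I}"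
  proof
    fix x assume "x \<in> I"
    then show "x \<in> (I \<inter> {0, 1}) \<union> (\<lambda>i. i + 2) ` {i. i + 2 \<in> I}"
    proof (cases "x < 2")
      case False
      then obtain m where "x = m + 2" by (metis le_add_diff_inverse2 not_less)
      with \<open>x \<in> I\<close> show ?thesis by blast
    qed (use \<open>x \<in> I\<close> in auto)
  qed
  then have "card I \<le> card ((I \<inter> {0, 1}) \<union> (\<lambda>i. i + 2) ` {i. i + 2 \<in> I})"
    by (intro card_mono finite_UnI finite_imageI fin) (simp_all add: assms(2))
  also have "\<dots> \<le> card (I \<inter> {0, 1}) + card ((\<lambda>i. i + 2) ` {i. i + 2 \<in> I})"
    by (rule card_Un_le)
  finally have "card I \<le> card (I \<inter> {0, 1}) + card ((\<lambda>i. i + 2) ` {i. i + 2 \<in> I})" .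
  moreover have "card (I \<inter> {0, 1}) \<le> 1"
    using assms(1) unfolding non_overlapping_def
    by (cases "0 \<in> I"; cases "1 \<in> I") (auto simp: card_le_Suc0_iff_eq)
  moreover have "card ((\<lambda>i. i + 2) ` {i. i + 2 \<in> I}) \<le> card {i. i + 2 \<in> I}"
    by (rule card_image_le) (rule fin)
  ultimately show ?thesis by linarith
qed

fun greedy_nonoverlap :: "('b \<Rightarrow> 'b \<Rightarrow> bool) \<Rightarrow> 'b list \<Rightarrow> nat" where
  "greedy_nonoverlap R (a # b # l) =
     (if R a b then Suc (greedy_nonoverlap R l) else greedy_nonoverlap R (b # l))"
| "greedy_nonoverlap R _ = 0"

lemma greedy_nonoverlap_attained:
  "\<exists>I. I \<subseteq> adj_set R l \<and> non_overlapping I \<and> card I = greedy_nonoverlap R l"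
proof (induction R l rule: greedy_nonoverlap.induct)
  case (1 R a b l)
  show ?case
  proof (cases "R a b")
    case True
    with "1.IH"(1) obtain I where I: "I \<subseteq> adj_set R l" "non_overlapping I" "card I = greedy_nonoverlap R l"
      by blast
    let ?J = "insert 0 ((+) 2 ` I)"
    have "finite I" using I(1) by (rule finite_subset) simp
    then have "card ?J = greedy_nonoverlap R (a # b # l)"
      using I(3) True by (subst card_insert_disjoint) (auto simp: card_image inj_on_def)
    moreover have "?J \<subseteq> adj_set R (a # b # l)"
      using I(1) True by auto
    moreover have "non_overlapping ?J"
      using I(2) by (rule non_overlapping_insert_0_shift_2)
    ultimately show ?thesis by blast
  next
    case False
    with "1.IH"(2) obtain I where I: "I \<subseteq> adj_set R (b # l)" "non_overlapping I"
        "card I = greedy_nonoverlap R (b # l)"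
      by blast
    then have "Suc ` I \<subseteq> adj_set R (a # b # l)" "card (Suc ` I) = greedy_nonoverlap R (a # b # l)"
      "non_overlapping (Suc ` I)"
      using False by (auto simp: card_image non_overlapping_Suc_image)
    then show ?thesis by blast
  qed
qed (rule exI[of _ "{}"], simp add: non_overlapping_def)+

lemma card_le_greedy_nonoverlap:
  "I \<subseteq> adj_set R l \<Longrightarrow> non_overlapping I \<Longrightarrow> card I \<le> greedy_nonoverlap R l"
proof (induction R l arbitrary: I rule: greedy_nonoverlap.induct)
  case (1 R a b l)
  have "finite I" using "1.prems"(1) by (rule finite_subset) simp
  show ?case
  proof (cases "R a b")
    case True
    have "{i. i + 2 \<in> I} \<subseteq> adj_set R l"
      using "1.prems"(1) by auto
    then have "card {i. i + 2 \<in> I} \<le> greedy_nonoverlap R l"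
      using "1.IH"(1)[OF True] non_overlapping_shift[OF "1.prems"(2)] by blast
    then show ?thesis
      using card_non_overlapping_le[OF "1.prems"(2) \<open>finite I\<close>] True by simp
  next
    case False
    then have "0 \<notin> I" using "1.prems"(1) by auto
    then have I: "I = Suc ` {i. Suc i \<in> I}"
      by (auto simp: image_iff) (metis not0_implies_Suc)
    have "{i. Suc i \<in> I} \<subseteq> adj_set R (b # l)"
      using "1.prems"(1) by auto
    moreover have "non_overlapping {i. Suc i \<in> I}"
      using non_overlapping_shift[OF "1.prems"(2), of 1] by simp
    ultimately have "card {i. Suc i \<in> I} \<le> greedy_nonoverlap R (b # l)"
      using "1.IH"(2)[OF False] by blast
    then show ?thesis
      using False by (subst I) (simp add: card_image)
  qed
qed simp_all

lemma finite_card_non_overlapping_subsets: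
  "finite A \<Longrightarrow> finite {card I | I. I \<subseteq> A \<and> non_overlapping I}"
  by (rule finite_subset[of _ "{..card A}"]) (auto intro: card_mono)

lemma Max_non_overlapping_adj_set:
  "Max {card I | I. I \<subseteq> adj_set R l \<and> non_overlapping I} = greedy_nonoverlap R l"
proof (rule Max_eqI)
  show "finite {card I | I. I \<subseteq> adj_set R l \<and> non_overlapping I}"
    by (simp add: finite_card_non_overlapping_subsets)
  show "x \<le> greedy_nonoverlap R l" if "x \<in> {card I | I. I \<subseteq> adj_set R l \<and> non_overlapping I}" for x
    using that card_le_greedy_nonoverlap by blast
  show "greedy_nonoverlap R l \<in> {card I | I. I \<subseteq> adj_set R l \<and> non_overlapping I}"
    using greedy_nonoverlap_attained[of R l] by (metis (mono_tags, lifting) mem_Collect_eq)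
qed

lemma MND_eq_greedy_nonoverlap: "MND l = greedy_nonoverlap (>) l"
  by (simp add: MND_def des_set_eq_adj_set Max_non_overlapping_adj_set)

lemma non_overlapping_asc_set:
  assumes "avoids_123_132 l"
  shows "non_overlapping (asc_set l)"
proof -
  have no_double_ascent: "Suc i \<notin> asc_set l" if "i \<in> asc_set l" for i
  proof
    assume "Suc i \<in> asc_set l"
    with that have "i < Suc i \<and> Suc i < Suc (Suc i) \<and> Suc (Suc i) < length l \<and>
        l!i < l!Suc i \<and> l!i < l!Suc (Suc i)"
      by (auto simp: asc_set_def)
    with assms show False
      unfolding avoids_123_132_def by blast
  qed
  show ?thesis
    unfolding non_overlapping_def
  proof (intro ballI impI)
    fix i j assume "i \<in> asc_set l" "j \<in> asc_set l" "i \<noteq> j"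
    moreover from this have "j \<noteq> Suc i" "i \<noteq> Suc j"
      using no_double_ascent by blast+
    ultimately show "i + 2 \<le> j \<or> j + 2 \<le> i" by linarith
  qed
qed

lemma Max_non_overlapping_subsets_eq_card:
  assumes "finite A" "non_overlapping A"
  shows "Max {card I | I. I \<subseteq> A \<and> non_overlapping I} = card A"
proof (rule Max_eqI)
  show "finite {card I | I. I \<subseteq> A \<and> non_overlapping I}"
    using assms(1) by (rule finite_card_non_overlapping_subsets)
  show "x \<le> card A" if "x \<in> {card I | I. I \<subseteq> A \<and> non_overlapping I}" for x
    using that assms(1) by (auto intro: card_mono)
  show "card A \<in> {card I | I. I \<subseteq> A \<and> non_overlapping I}"
    using assms(2) by blast
qed

lemma MNA_eq_asc: "avoids_123_132 l \<Longrightarrow> MNA l = asc l"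
  unfolding MNA_def asc_def
  by (rule Max_non_overlapping_subsets_eq_card)
    (simp add: asc_set_eq_adj_set, rule non_overlapping_asc_set)

section \<open>Decomposition by the first entry\<close>

definition Av_123_132 :: "nat \<Rightarrow> nat list set" where
  "Av_123_132 n = {\<pi> \<in> permutations_of_set {1..n}. avoids_123_132 \<pi>}"

definition Av_top :: "nat \<Rightarrow> nat list set" where
  "Av_top n = {\<pi> \<in> Av_123_132 n. \<pi> \<noteq> [] \<and> hd \<pi> = n}"

definition Av_sub :: "nat \<Rightarrow> nat list set" where
  "Av_sub n = {\<pi> \<in> Av_123_132 n. \<pi> \<noteq> [] \<and> hd \<pi> \<noteq> n}"

lemma mem_Av_123_132:
  "\<pi> \<in> Av_123_132 n \<longleftrightarrow> set \<pi> = {1..n} \<and> distinct \<pi> \<and> avoids_123_132 \<pi>"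
  by (auto simp: Av_123_132_def permutations_of_set_def)

lemma Av2_123_132_eq: "Av2 n [1, 2, 3] [1, 3, 2] = Av_123_132 n"
  unfolding Av2_def Av_123_132_def
  by (intro Collect_cong conj_cong refl avoids_123_and_132_iff) (simp add: permutations_of_set_def)

lemma finite_Av_123_132 [simp]: "finite (Av_123_132 n)"
  unfolding Av_123_132_def by simp

lemma Av_123_132_0: "Av_123_132 0 = {[]}"
  by (auto simp: mem_Av_123_132 avoids_123_132_def)

lemma Av_top_0 [simp]: "Av_top 0 = {}" and Av_sub_0 [simp]: "Av_sub 0 = {}"
  by (auto simp: Av_top_def Av_sub_def Av_123_132_0)

lemma Av_123_132_split:
  assumes "1 \<le> n"
  shows "(\<Sum>\<pi>\<in>Av_123_132 n. g \<pi>) = (\<Sum>\<pi>\<in>Av_top n. g \<pi>) + (\<Sum>\<pi>\<in>Av_sub n. g \<pi>)"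
proof -
  have "Av_123_132 n = Av_top n \<union> Av_sub n"
    using assms by (auto simp: Av_top_def Av_sub_def mem_Av_123_132)
  moreover have "Av_top n \<inter> Av_sub n = {}"
    by (auto simp: Av_top_def Av_sub_def)
  moreover have "finite (Av_top n)" "finite (Av_sub n)"
    by (simp_all add: Av_top_def Av_sub_def)
  ultimately show ?thesis
    by (simp add: sum.union_disjoint)
qed

lemma hd_Av_123_132:
  assumes "\<pi> \<in> Av_123_132 n" "1 \<le> n"
  shows "\<pi> \<noteq> [] \<and> hd \<pi> \<in> {1..n}"
proof -
  have "set \<pi> = {1..n}" using assms(1) by (simp add: mem_Av_123_132)
  moreover from this have "\<pi> \<noteq> []" using assms(2) by auto
  ultimately show ?thesis using hd_in_set by blast
qed

lemma hd_Av_123_132_Suc: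
  assumes "\<pi> \<in> Av_123_132 (Suc n)"
  shows "\<pi> \<noteq> [] \<and> (hd \<pi> = n \<or> hd \<pi> = Suc n)"
proof -
  from assms have set: "set \<pi> = {1..Suc n}" and distinct: "distinct \<pi>"
    and avoids: "avoids_123_132 \<pi>"
    by (simp_all add: mem_Av_123_132)
  then obtain a \<rho> where \<pi>: "\<pi> = a # \<rho>"
    by (cases \<pi>) auto
  have a: "1 \<le> a" "a \<le> Suc n"
    using set \<pi> by auto
  have \<rho>: "set \<rho> = {1..Suc n} - {a}"
    using set distinct \<pi> by auto
  have "\<not> a < n"
  proof
    assume "a < n"
    then have "n \<in> set \<rho>" "Suc n \<in> set \<rho>"
      using a by (auto simp: \<rho>)
    moreover have "\<forall>x\<in>set \<rho>. \<forall>x'\<in>set \<rho>. a < x \<longrightarrow> a < x' \<longrightarrow> x = x'"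
      using avoids distinct unfolding \<pi> by (simp add: avoids_123_132_Cons)
    ultimately show False
      using \<open>a < n\<close> by (metis less_SucI n_not_Suc_n)
  qed
  with a have "a = n \<or> a = Suc n" by linarith
  with \<pi> show ?thesis by simp
qed

lemma transpose_Suc_order_preserving:
  assumes "\<not> (n \<in> A \<and> Suc n \<in> A)"
  shows "\<forall>x\<in>A. \<forall>x'\<in>A. transpose n (Suc n) x < transpose n (Suc n) x' \<longleftrightarrow> x < x'"
  using assms by (auto simp: transpose_def)

lemma transpose_Suc_image:
  assumes "1 \<le> n"
  shows "transpose n (Suc n) ` {1..n} = {1..Suc n} - {n}"
proof -
  have "{1..n} = insert n {1..<n}" "{1..Suc n} - {n} = insert (Suc n) {1..<n}"
    using assms by auto
  moreover have "transpose n (Suc n) ` {1..<n} = {1..<n}"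
    by (rule transpose_image_eq) auto
  ultimately show ?thesis by simp
qed

lemma Cons_Suc_mem_Av_123_132_iff: "Suc n # \<sigma> \<in> Av_123_132 (Suc n) \<longleftrightarrow> \<sigma> \<in> Av_123_132 n"
proof
  assume "Suc n # \<sigma> \<in> Av_123_132 (Suc n)"
  moreover have "{1..Suc n} - {Suc n} = {1..n}" by auto
  ultimately show "\<sigma> \<in> Av_123_132 n"
    by (auto simp: mem_Av_123_132 avoids_123_132_Cons)
next
  assume "\<sigma> \<in> Av_123_132 n"
  then show "Suc n # \<sigma> \<in> Av_123_132 (Suc n)"
    by (auto simp: mem_Av_123_132 avoids_123_132_Cons)
qed

lemma Cons_map_transpose_mem_Av_123_132_iff:
  assumes "1 \<le> n"
  shows "n # map (transpose n (Suc n)) \<sigma> \<in> Av_123_132 (Suc n) \<longleftrightarrow> \<sigma> \<in> Av_123_132 n"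
proof -
  let ?\<tau> = "transpose n (Suc n)"
  have set_iff: "set (map ?\<tau> \<sigma>) = {1..Suc n} - {n} \<longleftrightarrow> set \<sigma> = {1..n}"
    by (simp only: set_map transpose_Suc_image[OF assms, symmetric] inj_image_eq_iff[OF inj_transpose])
  have avoids_iff: "avoids_123_132 (n # map ?\<tau> \<sigma>) \<longleftrightarrow> avoids_123_132 \<sigma>"
    if "set \<sigma> = {1..n}" "distinct \<sigma>"
  proof -
    have "set (map ?\<tau> \<sigma>) = {1..Suc n} - {n}" "distinct (map ?\<tau> \<sigma>)"
      using set_iff that by (simp_all add: distinct_map)
    moreover have "avoids_123_132 (map ?\<tau> \<sigma>) \<longleftrightarrow> avoids_123_132 \<sigma>"
      using transpose_Suc_order_preserving[of n "set \<sigma>"] that(1) by (simp add: avoids_123_132_map)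
    ultimately show ?thesis
      by (auto simp: avoids_123_132_Cons)
  qed
  have "n \<in> {1..Suc n}" using assms by simp
  then have "insert n (set \<rho>) = {1..Suc n} \<and> n \<notin> set \<rho> \<longleftrightarrow> set \<rho> = {1..Suc n} - {n}" for \<rho>
    by blast
  then have "n # map ?\<tau> \<sigma> \<in> Av_123_132 (Suc n) \<longleftrightarrow>
      set (map ?\<tau> \<sigma>) = {1..Suc n} - {n} \<and> distinct (map ?\<tau> \<sigma>) \<and> avoids_123_132 (n # map ?\<tau> \<sigma>)"
    unfolding mem_Av_123_132 list.set(2) distinct.simps(2) by blast
  also have "\<dots> \<longleftrightarrow> set \<sigma> = {1..n} \<and> distinct \<sigma> \<and> avoids_123_132 (n # map ?\<tau> \<sigma>)"
    by (simp only: set_iff distinct_map inj_on_transpose simp_thms)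
  finally show ?thesis
    using avoids_iff by (auto simp only: mem_Av_123_132)
qed

lemma Av_top_Suc: "Av_top (Suc n) = (#) (Suc n) ` Av_123_132 n"
proof (intro equalityI subsetI)
  fix \<pi> assume "\<pi> \<in> Av_top (Suc n)"
  then obtain \<sigma> where "\<pi> = Suc n # \<sigma>" "\<pi> \<in> Av_123_132 (Suc n)"
    by (cases \<pi>) (auto simp: Av_top_def)
  then show "\<pi> \<in> (#) (Suc n) ` Av_123_132 n"
    by (auto simp: Cons_Suc_mem_Av_123_132_iff)
next
  fix \<pi> assume "\<pi> \<in> (#) (Suc n) ` Av_123_132 n"
  then show "\<pi> \<in> Av_top (Suc n)"
    by (auto simp: Av_top_def Cons_Suc_mem_Av_123_132_iff)
qed

lemma Av_sub_Suc:
  assumes "1 \<le> n"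
  shows "Av_sub (Suc n) = (\<lambda>\<sigma>. n # map (transpose n (Suc n)) \<sigma>) ` Av_123_132 n"
proof (intro equalityI subsetI)
  fix \<pi> assume "\<pi> \<in> Av_sub (Suc n)"
  then have \<pi>: "\<pi> \<in> Av_123_132 (Suc n)" "\<pi> \<noteq> []" "hd \<pi> \<noteq> Suc n"
    by (simp_all add: Av_sub_def)
  then obtain \<rho> where "\<pi> = n # \<rho>"
    using hd_Av_123_132_Suc[OF \<pi>(1)] by (cases \<pi>) auto
  moreover define \<sigma> where "\<sigma> = map (transpose n (Suc n)) \<rho>"
  ultimately have "\<pi> = n # map (transpose n (Suc n)) \<sigma>"
    by (simp add: comp_def)
  moreover from this have "\<sigma> \<in> Av_123_132 n"
    using \<pi>(1) Cons_map_transpose_mem_Av_123_132_iff[OF assms] by simp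
  ultimately show "\<pi> \<in> (\<lambda>\<sigma>. n # map (transpose n (Suc n)) \<sigma>) ` Av_123_132 n"
    by blast
next
  fix \<pi> assume "\<pi> \<in> (\<lambda>\<sigma>. n # map (transpose n (Suc n)) \<sigma>) ` Av_123_132 n"
  then show "\<pi> \<in> Av_sub (Suc n)"
    using Cons_map_transpose_mem_Av_123_132_iff[OF assms] by (auto simp: Av_sub_def)
qed

lemma Av_sub_1: "Av_sub (Suc 0) = {}"
proof -
  have "hd \<pi> = Suc 0" if "\<pi> \<in> Av_123_132 (Suc 0)" for \<pi>
    using hd_Av_123_132_Suc[OF that] that by (auto simp: mem_Av_123_132 dest: hd_in_set)
  then show ?thesis by (auto simp: Av_sub_def)
qed

section \<open>The weight and its generating series\<close>

context
  fixes p q y z :: "'a::comm_ring_1"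
begin

(* free: the first adjacent pair may still join the greedy set of non-overlapping descents. *)

fun weight :: "bool \<Rightarrow> nat list \<Rightarrow> 'a" where
  "weight free (a # b # l) =
     (if a < b then p * y * weight True (b # l)
      else if b < a then (if free then q * z else q) * weight (\<not> free) (b # l)
      else weight True (b # l))"
| "weight _ _ = 1"

lemma weight_True: "weight True l = p ^ asc l * q ^ des l * y ^ asc l * z ^ MND l"
  unfolding MND_eq_greedy_nonoverlap
proof (induction l rule: induct_list012)
  case (3 a b l)
  show ?case
  proof (cases "b < a")
    case True
    then show ?thesis
    proof (cases l)
      case (Cons c l')
      with True "3.IH"(1) show ?thesis
        by (simp add: asc_Cons_Cons des_Cons_Cons mult_ac)
    qed (simp add: asc_Cons_Cons des_Cons_Cons)
  next
    case False
    with "3.IH"(2) show ?thesis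
      by (auto simp: asc_Cons_Cons des_Cons_Cons mult_ac)
  qed
qed simp_all

lemma weight_map:
  "\<forall>x\<in>set l. \<forall>x'\<in>set l. f x < f x' \<longleftrightarrow> x < x' \<Longrightarrow> weight free (map f l) = weight free l"
  by (induction free l rule: weight.induct) auto

lemma weight_Cons_ascent:
  "\<sigma> \<noteq> [] \<Longrightarrow> a < hd \<sigma> \<Longrightarrow> weight free (a # \<sigma>) = p * y * weight True \<sigma>"
  by (cases \<sigma>) auto

lemma weight_Cons_descent:
  "\<sigma> \<noteq> [] \<Longrightarrow> hd \<sigma> < a \<Longrightarrow>
     weight free (a # \<sigma>) = (if free then q * z else q) * weight (\<not> free) \<sigma>"
  by (cases \<sigma>) auto

definition top_sum :: "bool \<Rightarrow> nat \<Rightarrow> 'a" where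
  "top_sum free n = (\<Sum>\<pi>\<in>Av_top n. weight free \<pi>)"

definition sub_sum :: "bool \<Rightarrow> nat \<Rightarrow> 'a" where
  "sub_sum free n = (\<Sum>\<pi>\<in>Av_sub n. weight free \<pi>)"

lemma top_sum_0 [simp]: "top_sum free 0 = 0" and sub_sum_0 [simp]: "sub_sum free 0 = 0"
  by (simp_all add: top_sum_def sub_sum_def)

lemma sum_Av_123_132_weight:
  "(\<Sum>\<pi>\<in>Av_123_132 n. weight free \<pi>) = of_bool (n = 0) + top_sum free n + sub_sum free n"
  by (cases "n = 0") (simp_all add: Av_123_132_0 Av_123_132_split top_sum_def sub_sum_def)

lemma top_sum_Suc:
  "top_sum free (Suc n) =
     of_bool (n = 0) + (if free then q * z else q) * (top_sum (\<not> free) n + sub_sum (\<not> free) n)"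
proof (cases "n = 0")
  case True
  then show ?thesis
    by (simp add: top_sum_def sub_sum_def Av_top_Suc Av_123_132_0)
next
  case False
  have "top_sum free (Suc n) = (\<Sum>\<sigma>\<in>Av_123_132 n. weight free (Suc n # \<sigma>))"
    unfolding top_sum_def Av_top_Suc by (simp add: sum.reindex)
  also have "\<dots> = (\<Sum>\<sigma>\<in>Av_123_132 n. (if free then q * z else q) * weight (\<not> free) \<sigma>)"
  proof (rule sum.cong)
    fix \<sigma> assume "\<sigma> \<in> Av_123_132 n"
    then have "\<sigma> \<noteq> []" "hd \<sigma> < Suc n"
      using hd_Av_123_132[of \<sigma> n] False by auto
    then show "weight free (Suc n # \<sigma>) = (if free then q * z else q) * weight (\<not> free) \<sigma>"
      by (rule weight_Cons_descent)
  qed simp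
  also have "\<dots> = (if free then q * z else q) * (top_sum (\<not> free) n + sub_sum (\<not> free) n)"
    using False by (simp add: sum_distrib_left[symmetric] sum_Av_123_132_weight)
  finally show ?thesis
    using False by simp
qed

lemma weight_Cons_transpose:
  assumes "\<sigma> \<in> Av_123_132 n" "1 \<le> n"
  shows "weight free (n # map (transpose n (Suc n)) \<sigma>) =
    (if hd \<sigma> = n then p * y * weight True \<sigma>
     else (if free then q * z else q) * weight (\<not> free) \<sigma>)"
proof -
  have set_\<sigma>: "set \<sigma> = {1..n}"
    using assms(1) by (simp add: mem_Av_123_132)
  have hd: "\<sigma> \<noteq> []" "hd \<sigma> \<in> {1..n}"
    using hd_Av_123_132[OF assms] by auto
  have "weight b (map (transpose n (Suc n)) \<sigma>) = weight b \<sigma>" for b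
    using transpose_Suc_order_preserving[of n "set \<sigma>"] by (simp add: set_\<sigma> weight_map)
  moreover have "hd (map (transpose n (Suc n)) \<sigma>) = transpose n (Suc n) (hd \<sigma>)"
    using hd(1) by (simp add: hd_map)
  ultimately show ?thesis
    using hd by (auto simp: weight_Cons_ascent weight_Cons_descent transpose_def)
qed

lemma sub_sum_Suc:
  "sub_sum free (Suc n) = p * y * top_sum True n + (if free then q * z else q) * sub_sum (\<not> free) n"
proof (cases "n = 0")
  case True
  then show ?thesis
    by (simp add: top_sum_def sub_sum_def Av_sub_1)
next
  case False
  let ?\<tau> = "transpose n (Suc n)"
  have "inj_on (\<lambda>\<sigma>. n # map ?\<tau> \<sigma>) (Av_123_132 n)"
    by (rule inj_onI) (auto dest: map_injective simp: inj_transpose)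
  moreover have "Av_sub (Suc n) = (\<lambda>\<sigma>. n # map ?\<tau> \<sigma>) ` Av_123_132 n"
    using False by (simp add: Av_sub_Suc)
  ultimately have "sub_sum free (Suc n) = (\<Sum>\<sigma>\<in>Av_123_132 n. weight free (n # map ?\<tau> \<sigma>))"
    by (simp add: sub_sum_def sum.reindex)
  also have "\<dots> = (\<Sum>\<sigma>\<in>Av_top n. weight free (n # map ?\<tau> \<sigma>)) +
                   (\<Sum>\<sigma>\<in>Av_sub n. weight free (n # map ?\<tau> \<sigma>))"
    using False by (simp add: Av_123_132_split)
  also have "\<dots> = (\<Sum>\<sigma>\<in>Av_top n. p * y * weight True \<sigma>) +
                   (\<Sum>\<sigma>\<in>Av_sub n. (if free then q * z else q) * weight (\<not> free) \<sigma>)"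
    using False by (intro arg_cong2[where f = "(+)"] sum.cong refl)
      (simp_all add: Av_top_def Av_sub_def weight_Cons_transpose)
  finally show ?thesis
    by (simp add: top_sum_def sub_sum_def sum_distrib_left)
qed

definition top_series :: "bool \<Rightarrow> 'a fps" where
  "top_series free = Abs_fps (top_sum free)"

definition sub_series :: "bool \<Rightarrow> 'a fps" where
  "sub_series free = Abs_fps (sub_sum free)"

lemma top_series_eq:
  "top_series free =
     fps_X * (1 + fps_const (if free then q * z else q) * (top_series (\<not> free) + sub_series (\<not> free)))"
proof (rule fps_ext)
  fix n show "fps_nth (top_series free) n =
      fps_nth (fps_X * (1 + fps_const (if free then q * z else q) * (top_series (\<not> free) + sub_series (\<not> free)))) n"
    by (cases n) (simp_all add: top_series_def sub_series_def top_sum_Suc)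
qed

lemma sub_series_eq:
  "sub_series free =
     fps_X * (fps_const (p * y) * top_series True + fps_const (if free then q * z else q) * sub_series (\<not> free))"
proof (rule fps_ext)
  fix n show "fps_nth (sub_series free) n =
      fps_nth (fps_X * (fps_const (p * y) * top_series True + fps_const (if free then q * z else q) * sub_series (\<not> free))) n"
    by (cases n) (simp_all add: top_series_def sub_series_def sub_sum_Suc)
qed

lemma G_123_132_eq: "G_123_132 p q y z = 1 + top_series True + sub_series True"
proof (rule fps_ext)
  fix n
  have "(\<Sum>\<pi>\<in>Av2 n [1, 2, 3] [1, 3, 2]. p ^ asc \<pi> * q ^ des \<pi> * y ^ MNA \<pi> * z ^ MND \<pi>) =
        (\<Sum>\<pi>\<in>Av_123_132 n. weight True \<pi>)"
    unfolding Av2_123_132_eq by (rule sum.cong) (simp_all add: weight_True MNA_eq_asc mem_Av_123_132)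
  then show "fps_nth (G_123_132 p q y z) n = fps_nth (1 + top_series True + sub_series True) n"
    by (simp add: G_123_132_def top_series_def sub_series_def sum_Av_123_132_weight)
qed

end

lemma series_system_solution:
  fixes x P Q Y Z T T' B B' :: "'a::idom"
  assumes "T = x * (1 + Q * Z * (T' + B'))" "T' = x * (1 + Q * (T + B))"
    and "B = x * (P * Y * T + Q * Z * B')" "B' = x * (P * Y * T + Q * B)"
  shows "(1 + T + B) * (1 - 2 * Q^2 * x^2 * Z - P * Q * x^2 * Y * Z - 2 * P * Q^2 * x^3 * Y * Z
           + Q^4 * x^4 * Z^2 - P * Q^3 * x^4 * Y * Z^2) =
    1 + x + P * x^2 * Y + Q * x^2 * Z - 2 * Q^2 * x^2 * Z - Q^2 * x^3 * Z - P * Q * x^2 * Y * Z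
      + 2 * P * Q * x^3 * Y * Z - 2 * P * Q^2 * x^3 * Y * Z - Q^3 * x^4 * Z^2 + Q^4 * x^4 * Z^2
      + P * Q^2 * x^4 * Y * Z^2 - P * Q^3 * x^4 * Y * Z^2"
  using assms by algebra

theorem theorem2:
  fixes p q y z :: "'a::field"
  defines "x \<equiv> (fps_X :: 'a fps)"
      and "P \<equiv> fps_const p" and "Q \<equiv> fps_const q" and "Y \<equiv> fps_const y" and "Z \<equiv> fps_const z"
  shows "G_123_132 p q y z =
    (1 + x + P * x^2 * Y + Q * x^2 * Z - 2 * Q^2 * x^2 * Z - Q^2 * x^3 * Z - P * Q * x^2 * Y * Z
       + 2 * P * Q * x^3 * Y * Z - 2 * P * Q^2 * x^3 * Y * Z - Q^3 * x^4 * Z^2 + Q^4 * x^4 * Z^2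
       + P * Q^2 * x^4 * Y * Z^2 - P * Q^3 * x^4 * Y * Z^2)
    / (1 - 2 * Q^2 * x^2 * Z - P * Q * x^2 * Y * Z - 2 * P * Q^2 * x^3 * Y * Z + Q^4 * x^4 * Z^2
       - P * Q^3 * x^4 * Y * Z^2)"
    (is "_ = ?num / ?den")
proof -
  let ?T = "top_series p q y z" and ?B = "sub_series p q y z"
  have "?T True = x * (1 + Q * Z * (?T False + ?B False))"
    using top_series_eq[of p q y z True] by (simp add: x_def Q_def Z_def)
  moreover have "?T False = x * (1 + Q * (?T True + ?B True))"
    using top_series_eq[of p q y z False] by (simp add: x_def Q_def)
  moreover have "?B True = x * (P * Y * ?T True + Q * Z * ?B False)"
    using sub_series_eq[of p q y z True] by (simp add: x_def P_def Q_def Y_def Z_def)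
  moreover have "?B False = x * (P * Y * ?T True + Q * ?B True)"
    using sub_series_eq[of p q y z False] by (simp add: x_def P_def Q_def Y_def)
  ultimately have "G_123_132 p q y z * ?den = ?num"
    unfolding G_123_132_eq by (rule series_system_solution)
  moreover have "?den \<noteq> 0"
  proof
    assume "?den = 0"
    then have "fps_nth ?den 0 = 0" by simp
    then show False by (simp add: x_def)
  qed
  ultimately show ?thesis
    by (metis fps_divide_times_eq)
qed

end
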